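(* Let $\mathcal H$ be a complex separable Hilbert space and let $A,B,A_n,B_n$ ($n\in\mathbb N$) be self-adjoint operators in $\mathcal H$. If $\phi,\psi\in\mathfrak A_r^s(E_A)$, then $\phi+\psi\in\mathfrak A_r^s(E_A)$; and if $\phi,\psi\in\mathfrak A_l^s(E_B)$, then $\phi+\psi\in\mathfrak A_l^s(E_B)$.
   Context: For a function $\phi$ on $\mathbb R^2$, an admissible representation of $\phi$ consists of a measure space $(\Omega,\eta)$ and measurable functions $\alpha,\beta$ on $\mathbb R\times\Omega$ with $\phi(\lambda,\mu)=\int_\Omega\alpha(\lambda,t)\beta(\mu,t)\,d\eta(t)$ for $(\lambda,\mu)\in\mathbb R^2$, $\sup_{\lambda\in\mathbb R}\int_\Omega|\alpha(\lambda,t)|^2d\eta(t)<\infty$ and $\sup_{\mu\in\mathbb R}\int_\Omega|\beta(\mu,t)|^2d\eta(t)<\infty$. Put $a(t)=\int_{\mathbb R}\alpha(\lambda,t)\,dE_A(\lambda)$, $a_n(t)=\int_{\mathbb R}\alpha(\lambda,t)\,dE_{A_n}(\lambda)$, $b(t)=\int_{\mathbb R}\beta(\mu,t)\,dE_B(\mu)$, $b_n(t)=\int_{\mathbb R}\beta(\mu,t)\,dE_{B_n}(\mu)$, where $E_T$ is the spectral measure of $T$. Then $\phi\in\mathfrak A_r^s(E_A)$ means $\phi$ has an admissible representation with $\lim_{n\to\infty}\int_\Omega\|a_n(t)v-a(t)v\|^2d\eta(t)=0$ for every $v\in\mathcal H$, and $\phi\in\mathfrak A_l^s(E_B)$ means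 $\phi$ has an admissible representation with $\lim_{n\to\infty}\int_\Omega\|b_n(t)v-b(t)v\|^2d\eta(t)=0$ for every $v\in\mathcal H$. *)

theory Defs
  imports "HOL-Analysis.Analysis"
begin

class chs_complex_vector = ab_group_add +
  fixes scaleC :: "complex \<Rightarrow> 'a \<Rightarrow> 'a"
  assumes scaleC_add_right: "scaleC a (x + y) = scaleC a x + scaleC a y"
    and scaleC_add_left: "scaleC (a + b) x = scaleC a x + scaleC b x"
    and scaleC_scaleC: "scaleC a (scaleC b x) = scaleC (a * b) x"
    and scaleC_one: "scaleC 1 x = x"

text \<open>Inner product: linear in the first, conjugate linear in the second argument.\<close>
class chs_complex_inner = chs_complex_vector +
  fixes cinner :: "'a \<Rightarrow> 'a \<Rightarrow> complex"
  assumes cinner_add_left: "cinner (x + y) z = cinner x z + cinner y z"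
    and cinner_scaleC_left: "cinner (scaleC a x) y = a * cinner x y"
    and cinner_commute: "cinner y x = cnj (cinner x y)"
    and cinner_ge_zero: "0 \<le> Re (cinner x x)"
    and cinner_eq_zero_iff: "cinner x x = 0 \<longleftrightarrow> x = 0"

definition cnorm :: "'a::chs_complex_inner \<Rightarrow> real" where
  "cnorm x = sqrt (Re (cinner x x))"

class chs_chilbert = chs_complex_inner +
  assumes chs_complete:
    "(\<forall>e>0. \<exists>N. \<forall>m\<ge>N. \<forall>n\<ge>N. sqrt (Re (cinner (X m - X n) (X m - X n))) < e)
      \<Longrightarrow> \<exists>L. (\<lambda>n. sqrt (Re (cinner (X n - L) (X n - L)))) \<longlonglongrightarrow> 0"

definition cdense :: "'h::chs_complex_inner set \<Rightarrow> bool" where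
  "cdense D \<longleftrightarrow> (\<forall>x. \<forall>e>0. \<exists>d\<in>D. cnorm (x - d) < e)"

definition separable_ch :: "'h::chs_complex_inner set \<Rightarrow> bool" where
  "separable_ch H \<longleftrightarrow> (\<exists>D\<subseteq>H. countable D \<and> (\<forall>x\<in>H. \<forall>e>0. \<exists>d\<in>D. cnorm (x - d) < e))"

definition clinear :: "('h::chs_complex_vector \<Rightarrow> 'h) \<Rightarrow> bool" where
  "clinear f \<longleftrightarrow> (\<forall>x y. f (x + y) = f x + f y) \<and> (\<forall>a x. f (scaleC a x) = scaleC a (f x))"

definition csubspace :: "'h::chs_complex_vector set \<Rightarrow> bool" where
  "csubspace D \<longleftrightarrow> 0 \<in> D \<and> (\<forall>x\<in>D. \<forall>y\<in>D. x + y \<in> D) \<and> (\<forall>a. \<forall>x\<in>D. scaleC a x \<in> D)"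

text \<open>An operator in H is a pair (domain, action).\<close>
type_synonym 'h op = "'h set \<times> ('h \<Rightarrow> 'h)"

definition self_adjoint :: "'h::chs_chilbert op \<Rightarrow> bool" where
  "self_adjoint A \<longleftrightarrow>
     (let D = fst A; T = snd A in
       csubspace D \<and> cdense D \<and>
       (\<forall>x\<in>D. \<forall>y\<in>D. T (x + y) = T x + T y) \<and> (\<forall>a. \<forall>x\<in>D. T (scaleC a x) = scaleC a (T x)) \<and>
       \<comment> \<open>dom(T) = dom(T*) and T* = T on it\<close>
       D = {u. \<exists>w. \<forall>v\<in>D. cinner (T v) u = cinner v w} \<and>
       (\<forall>u\<in>D. \<forall>v\<in>D. cinner (T v) u = cinner v (T u)))"

definition is_pvm :: "(real set \<Rightarrow> 'h::chs_chilbert \<Rightarrow> 'h) \<Rightarrow> bool" where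
  "is_pvm E \<longleftrightarrow>
     (\<forall>S. S \<notin> sets borel \<longrightarrow> E S = (\<lambda>_. 0)) \<and>
     (\<forall>S\<in>sets borel. clinear (E S) \<and> (\<forall>x. E S (E S x) = E S x) \<and>
                      (\<forall>x y. cinner (E S x) y = cinner x (E S y))) \<and>
     (\<forall>x. E UNIV x = x) \<and>
     (\<forall>S\<in>sets borel. \<forall>T\<in>sets borel. \<forall>x. E (S \<inter> T) x = E S (E T x)) \<and>
     (\<forall>F. range F \<subseteq> sets borel \<longrightarrow> disjoint_family F \<longrightarrow>
        (\<forall>x. (\<lambda>n. cnorm ((\<Sum>i<n. E (F i) x) - E (\<Union>i. F i) x)) \<longlonglongrightarrow> 0))"

definition pvm_measure :: "(real set \<Rightarrow> 'h::chs_chilbert \<Rightarrow> 'h) \<Rightarrow> 'h \<Rightarrow> real measure" where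
  "pvm_measure E v = measure_of UNIV (sets borel) (\<lambda>S. ennreal ((cnorm (E S v))\<^sup>2))"

text \<open>Spectral integral of a bounded function, characterised weakly:
  <(\<integral> f dE) v, u> = \<integral> f d<E(.) v, u>, the complex measure written by polarisation.\<close>
definition spint_bdd :: "(real set \<Rightarrow> 'h::chs_chilbert \<Rightarrow> 'h) \<Rightarrow> (real \<Rightarrow> complex) \<Rightarrow> 'h \<Rightarrow> 'h" where
  "spint_bdd E f v = (THE w. \<forall>u. cinner w u =
      (1/4) * (\<Sum>k<(4::nat). \<i>^k * (\<integral>l. f l \<partial>pvm_measure E (v + scaleC (\<i>^k) u))))"

definition trunc_fun :: "nat \<Rightarrow> (real \<Rightarrow> complex) \<Rightarrow> real \<Rightarrow> complex" where
  "trunc_fun N f l = (if cmod (f l) \<le> real N then f l else 0)"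

definition spint :: "(real set \<Rightarrow> 'h::chs_chilbert \<Rightarrow> 'h) \<Rightarrow> (real \<Rightarrow> complex) \<Rightarrow> 'h \<Rightarrow> 'h" where
  "spint E f v = (THE w. (\<lambda>N. cnorm (spint_bdd E (trunc_fun N f) v - w)) \<longlonglongrightarrow> 0)"

definition spectral_measure :: "'h::chs_chilbert op \<Rightarrow> (real set \<Rightarrow> 'h \<Rightarrow> 'h)" where
  "spectral_measure A = (THE E. is_pvm E \<and>
      fst A = {v. (\<integral>\<^sup>+ l. ennreal (l\<^sup>2) \<partial>pvm_measure E v) < \<infinity>} \<and>
      (\<forall>v\<in>fst A. snd A v = spint E (\<lambda>l. complex_of_real l) v))"

definition admissible_rep ::
  "'w measure \<Rightarrow> (real \<Rightarrow> 'w \<Rightarrow> complex) \<Rightarrow> (real \<Rightarrow> 'w \<Rightarrow> complex) \<Rightarrow> (real \<Rightarrow> real \<Rightarrow> complex) \<Rightarrow> bool" where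
  "admissible_rep \<eta> \<alpha> \<beta> \<phi> \<longleftrightarrow>
     (\<lambda>(l, t). \<alpha> l t) \<in> borel_measurable (borel \<Otimes>\<^sub>M \<eta>) \<and>
     (\<lambda>(l, t). \<beta> l t) \<in> borel_measurable (borel \<Otimes>\<^sub>M \<eta>) \<and>
     (\<forall>l m. \<phi> l m = (\<integral>t. \<alpha> l t * \<beta> m t \<partial>\<eta>)) \<and>
     (\<exists>C::real. \<forall>l. (\<integral>\<^sup>+ t. ennreal ((cmod (\<alpha> l t))\<^sup>2) \<partial>\<eta>) \<le> ennreal C) \<and>
     (\<exists>C::real. \<forall>m. (\<integral>\<^sup>+ t. ennreal ((cmod (\<beta> m t))\<^sup>2) \<partial>\<eta>) \<le> ennreal C)"

definition strong_approx ::
  "'w measure \<Rightarrow> (real \<Rightarrow> 'w \<Rightarrow> complex) \<Rightarrow> (real set \<Rightarrow> 'h::chs_chilbert \<Rightarrow> 'h) \<Rightarrow> (nat \<Rightarrow> real set \<Rightarrow> 'h \<Rightarrow> 'h) \<Rightarrow> bool" where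
  "strong_approx \<eta> \<gamma> E En \<longleftrightarrow>
     (\<forall>v. (\<lambda>n. \<integral>\<^sup>+ t. ennreal ((cnorm (spint (En n) (\<lambda>l. \<gamma> l t) v - spint E (\<lambda>l. \<gamma> l t) v))\<^sup>2) \<partial>\<eta>)
            \<longlonglongrightarrow> 0)"

text \<open>Membership in A_r^s(E) (resp. A_l^s(E)), with the measure space \<Omega> of the
  representation living in the type 'w.\<close>
definition in_Ars :: "'w itself \<Rightarrow> (real set \<Rightarrow> 'h::chs_chilbert \<Rightarrow> 'h) \<Rightarrow> (nat \<Rightarrow> real set \<Rightarrow> 'h \<Rightarrow> 'h)
    \<Rightarrow> (real \<Rightarrow> real \<Rightarrow> complex) \<Rightarrow> bool" where
  "in_Ars _ E En \<phi> \<longleftrightarrow> (\<exists>(\<eta>::'w measure) \<alpha> \<beta>. admissible_rep \<eta> \<alpha> \<beta> \<phi> \<and> strong_approx \<eta> \<alpha> E En)"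

definition in_Als :: "'w itself \<Rightarrow> (real set \<Rightarrow> 'h::chs_chilbert \<Rightarrow> 'h) \<Rightarrow> (nat \<Rightarrow> real set \<Rightarrow> 'h \<Rightarrow> 'h)
    \<Rightarrow> (real \<Rightarrow> real \<Rightarrow> complex) \<Rightarrow> bool" where
  "in_Als _ E En \<phi> \<longleftrightarrow> (\<exists>(\<eta>::'w measure) \<alpha> \<beta>. admissible_rep \<eta> \<alpha> \<beta> \<phi> \<and> strong_approx \<eta> \<beta> E En)"

end

theory Submission
  imports Defs
begin

text \<open>Both classes are closed under sums because admissible representations can be glued
  along the disjoint union of their measure spaces: if \<open>\<phi>\<close> is represented over
  \<open>(\<Omega>\<^sub>1, \<eta>\<^sub>1)\<close> by \<open>\<alpha>\<^sub>1, \<beta>\<^sub>1\<close> and \<open>\<psi>\<close> over \<open>(\<Omega>\<^sub>2, \<eta>\<^sub>2)\<close> by \<open>\<alpha>\<^sub>2, \<beta>\<^sub>2\<close>, then on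
  \<open>\<Omega>\<^sub>1 + \<Omega>\<^sub>2\<close> the functions acting as \<open>\<alpha>\<^sub>i, \<beta>\<^sub>i\<close> on the \<open>i\<close>-th summand represent \<open>\<phi> + \<psi>\<close>.
  Every integral over the union is the sum of the integrals over the summands, so the
  uniform \<open>L\<^sup>2\<close> bounds add up and the approximation errors are bounded by the sum of
  two null sequences.\<close>

definition sum_measure :: "'a measure \<Rightarrow> 'b measure \<Rightarrow> ('a + 'b) measure" where
  "sum_measure M N = measure_of (Inl ` space M \<union> Inr ` space N)
     {A. A \<subseteq> Inl ` space M \<union> Inr ` space N \<and> Inl -` A \<in> sets M \<and> Inr -` A \<in> sets N}
     (\<lambda>A. emeasure M (Inl -` A) + emeasure N (Inr -` A))"

lemma vimage_Inl_Inr_image [simp]: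
  "Inl -` Inl ` A = A" "Inr -` Inr ` B = B" "Inl -` Inr ` B = {}" "Inr -` Inl ` A = {}"
  by auto

lemma sigma_algebra_sum_sets:
  "sigma_algebra (Inl ` space M \<union> Inr ` space N)
     {A. A \<subseteq> Inl ` space M \<union> Inr ` space N \<and> Inl -` A \<in> sets M \<and> Inr -` A \<in> sets N}"
  unfolding sigma_algebra_iff2
  by (auto simp: vimage_Diff vimage_UN)

lemma space_sum_measure: "space (sum_measure M N) = Inl ` space M \<union> Inr ` space N"
  unfolding sum_measure_def by (rule space_measure_of) auto

lemma sets_sum_measure:
  "sets (sum_measure M N) =
     {A. A \<subseteq> Inl ` space M \<union> Inr ` space N \<and> Inl -` A \<in> sets M \<and> Inr -` A \<in> sets N}"
  unfolding sum_measure_def by (rule sigma_algebra.sets_measure_of_eq[OF sigma_algebra_sum_sets])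

lemma emeasure_sum_measure:
  assumes "A \<in> sets (sum_measure M N)"
  shows "emeasure (sum_measure M N) A = emeasure M (Inl -` A) + emeasure N (Inr -` A)"
proof -
  have "countably_additive (sets (sum_measure M N)) (\<lambda>A. emeasure M (Inl -` A) + emeasure N (Inr -` A))"
  proof (rule countably_additiveI)
    fix F :: "nat \<Rightarrow> _" assume F: "range F \<subseteq> sets (sum_measure M N)" "disjoint_family F"
    have "(\<Sum>i. emeasure M (Inl -` F i) + emeasure N (Inr -` F i)) =
          (\<Sum>i. emeasure M (Inl -` F i)) + (\<Sum>i. emeasure N (Inr -` F i))"
      by (rule suminf_add[symmetric]) auto
    also have "\<dots> = emeasure M (Inl -` \<Union> (range F)) + emeasure N (Inr -` \<Union> (range F))"
      using F by (subst (1 2) suminf_emeasure)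
        (auto simp: sets_sum_measure vimage_UN intro: disjoint_family_on_vimageI)
    finally show "(\<Sum>i. emeasure M (Inl -` F i) + emeasure N (Inr -` F i)) =
        emeasure M (Inl -` \<Union> (range F)) + emeasure N (Inr -` \<Union> (range F))" .
  qed
  then show ?thesis
    using assms unfolding sum_measure_def
    by (subst emeasure_measure_of_sigma[OF sigma_algebra_sum_sets])
      (auto simp: positive_def sets_sum_measure[unfolded sum_measure_def])
qed

lemma measurable_Inl_sum_measure: "Inl \<in> M \<rightarrow>\<^sub>M sum_measure M N"
  by (auto simp: measurable_def sets_sum_measure space_sum_measure)

lemma measurable_Inr_sum_measure: "Inr \<in> N \<rightarrow>\<^sub>M sum_measure M N"
  by (auto simp: measurable_def sets_sum_measure space_sum_measure)

lemma in_sets_sum_measure_Inl: "A \<in> sets M \<Longrightarrow> Inl ` A \<in> sets (sum_measure M N)"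
  by (auto simp: sets_sum_measure dest: sets.sets_into_space)

lemma in_sets_sum_measure_Inr: "B \<in> sets N \<Longrightarrow> Inr ` B \<in> sets (sum_measure M N)"
  by (auto simp: sets_sum_measure dest: sets.sets_into_space)

lemma measurable_projl_sum_measure: "projl \<in> restrict_space (sum_measure M N) {t. isl t} \<rightarrow>\<^sub>M M"
proof (rule measurableI)
  fix A assume A: "A \<in> sets M"
  then have "projl -` A \<inter> space (restrict_space (sum_measure M N) {t. isl t}) = {t. isl t} \<inter> Inl ` A"
    using sets.sets_into_space[OF A] by (auto simp: space_restrict_space space_sum_measure)
  with A show "projl -` A \<inter> space (restrict_space (sum_measure M N) {t. isl t})
      \<in> sets (restrict_space (sum_measure M N) {t. isl t})"
    by (simp add: sets_restrict_space in_sets_sum_measure_Inl)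
qed (auto simp: space_restrict_space space_sum_measure)

lemma measurable_projr_sum_measure: "projr \<in> restrict_space (sum_measure M N) {t. \<not> isl t} \<rightarrow>\<^sub>M N"
proof (rule measurableI)
  fix B assume B: "B \<in> sets N"
  then have "projr -` B \<inter> space (restrict_space (sum_measure M N) {t. \<not> isl t}) = {t. \<not> isl t} \<inter> Inr ` B"
    using sets.sets_into_space[OF B] by (auto simp: space_restrict_space space_sum_measure)
  with B show "projr -` B \<inter> space (restrict_space (sum_measure M N) {t. \<not> isl t})
      \<in> sets (restrict_space (sum_measure M N) {t. \<not> isl t})"
    by (simp add: sets_restrict_space in_sets_sum_measure_Inr)
qed (auto simp: space_restrict_space space_sum_measure)

lemma distr_eq_density_indicator_image:
  assumes f: "f \<in> M \<rightarrow>\<^sub>M S" and image: "f ` space M \<in> sets S"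
    and emeasure_image: "\<And>A. A \<in> sets S \<Longrightarrow> emeasure S (f ` space M \<inter> A) = emeasure M (f -` A \<inter> space M)"
  shows "distr M S f = density S (indicator (f ` space M))"
proof (rule measure_eqI)
  fix A assume "A \<in> sets (distr M S f)"
  then have A: "A \<in> sets S" by simp
  have "emeasure (density S (indicator (f ` space M))) A = (\<integral>\<^sup>+ x. indicator (f ` space M \<inter> A) x \<partial>S)"
    using A image by (auto simp: emeasure_density indicator_inter_arith mult.commute intro!: nn_integral_cong)
  also have "\<dots> = emeasure M (f -` A \<inter> space M)"
    using A image by (simp add: emeasure_image)
  finally show "emeasure (distr M S f) A = emeasure (density S (indicator (f ` space M))) A"
    using A f by (simp add: emeasure_distr)
qed simp

lemma distr_Inl_sum_measure:
  "distr M (sum_measure M N) Inl = density (sum_measure M N) (indicator (Inl ` space M))"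
  by (intro distr_eq_density_indicator_image measurable_Inl_sum_measure in_sets_sum_measure_Inl sets.top)
    (subst emeasure_sum_measure, auto simp: sets_sum_measure Int_commute)

lemma distr_Inr_sum_measure:
  "distr N (sum_measure M N) Inr = density (sum_measure M N) (indicator (Inr ` space N))"
  by (intro distr_eq_density_indicator_image measurable_Inr_sum_measure in_sets_sum_measure_Inr sets.top)
    (subst emeasure_sum_measure, auto simp: sets_sum_measure Int_commute)

lemma nn_integral_sum_measure:
  assumes g: "g \<in> borel_measurable (sum_measure M N)"
  shows "(\<integral>\<^sup>+ t. g t \<partial>sum_measure M N) = (\<integral>\<^sup>+ s. g (Inl s) \<partial>M) + (\<integral>\<^sup>+ s. g (Inr s) \<partial>N)"
proof -
  have "(\<integral>\<^sup>+ t. g t \<partial>sum_measure M N) =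
      (\<integral>\<^sup>+ t. indicator (Inl ` space M) t * g t + indicator (Inr ` space N) t * g t \<partial>sum_measure M N)"
    by (intro nn_integral_cong) (auto simp: space_sum_measure indicator_def)
  also have "\<dots> = (\<integral>\<^sup>+ t. g t \<partial>density (sum_measure M N) (indicator (Inl ` space M)))
      + (\<integral>\<^sup>+ t. g t \<partial>density (sum_measure M N) (indicator (Inr ` space N)))"
    using g in_sets_sum_measure_Inl[of "space M" M N] in_sets_sum_measure_Inr[of "space N" N M]
    by (simp add: nn_integral_add nn_integral_density)
  also have "\<dots> = (\<integral>\<^sup>+ s. g (Inl s) \<partial>M) + (\<integral>\<^sup>+ s. g (Inr s) \<partial>N)"
    using g by (simp add: distr_Inl_sum_measure[symmetric] distr_Inr_sum_measure[symmetric]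
      nn_integral_distr measurable_Inl_sum_measure measurable_Inr_sum_measure)
  finally show ?thesis .
qed

lemma integral_sum_measure:
  fixes g :: "'a + 'b \<Rightarrow> 'c::{banach, second_countable_topology}"
  assumes g: "integrable (sum_measure M N) g"
  shows "(\<integral>t. g t \<partial>sum_measure M N) = (\<integral>s. g (Inl s) \<partial>M) + (\<integral>s. g (Inr s) \<partial>N)"
proof -
  have "(\<integral>t. g t \<partial>sum_measure M N) =
      (\<integral>t. indicator (Inl ` space M) t *\<^sub>R g t + indicator (Inr ` space N) t *\<^sub>R g t \<partial>sum_measure M N)"
    by (intro Bochner_Integration.integral_cong) (auto simp: space_sum_measure indicator_def)
  also have "\<dots> = (\<integral>t. g t \<partial>density (sum_measure M N) (\<lambda>t. ennreal (indicator (Inl ` space M) t)))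
      + (\<integral>t. g t \<partial>density (sum_measure M N) (\<lambda>t. ennreal (indicator (Inr ` space N) t)))"
    using g in_sets_sum_measure_Inl[of "space M" M N] in_sets_sum_measure_Inr[of "space N" N M]
    by (simp add: integrable_mult_indicator integral_density)
  also have "\<dots> = (\<integral>s. g (Inl s) \<partial>M) + (\<integral>s. g (Inr s) \<partial>N)"
    using g by (simp add: ennreal_indicator distr_Inl_sum_measure[symmetric] distr_Inr_sum_measure[symmetric]
      integral_distr measurable_Inl_sum_measure measurable_Inr_sum_measure)
  finally show ?thesis .
qed

text \<open>No measurability is assumed: the integrands in \<open>strong_approx\<close> need not be measurable.\<close>

lemma nn_integral_sum_measure_le:
  "(\<integral>\<^sup>+ t. g t \<partial>sum_measure M N) \<le> (\<integral>\<^sup>+ s. g (Inl s) \<partial>M) + (\<integral>\<^sup>+ s. g (Inr s) \<partial>N)"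
  unfolding nn_integral_def[of "sum_measure M N"]
proof (rule SUP_least)
  fix h assume "h \<in> {h. simple_function (sum_measure M N) h \<and> h \<le> g}"
  then have h: "simple_function (sum_measure M N) h" "h \<le> g" by auto
  have "integral\<^sup>S (sum_measure M N) h = (\<integral>\<^sup>+ s. h (Inl s) \<partial>M) + (\<integral>\<^sup>+ s. h (Inr s) \<partial>N)"
    using h by (simp add: nn_integral_eq_simple_integral[symmetric] nn_integral_sum_measure
      borel_measurable_simple_function)
  also have "\<dots> \<le> (\<integral>\<^sup>+ s. g (Inl s) \<partial>M) + (\<integral>\<^sup>+ s. g (Inr s) \<partial>N)"
    using h(2) by (intro add_mono nn_integral_mono) (auto simp: le_fun_def)
  finally show "integral\<^sup>S (sum_measure M N) h \<le> \<dots>" .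
qed

lemma integrable_sum_measure_iff:
  fixes g :: "'a + 'b \<Rightarrow> 'c::{banach, second_countable_topology}"
  assumes "g \<in> borel_measurable (sum_measure M N)"
  shows "integrable (sum_measure M N) g \<longleftrightarrow> integrable M (\<lambda>s. g (Inl s)) \<and> integrable N (\<lambda>s. g (Inr s))"
  using assms measurable_compose[OF measurable_Inl_sum_measure assms]
    measurable_compose[OF measurable_Inr_sum_measure assms]
  by (simp add: integrable_iff_bounded nn_integral_sum_measure)

lemma measurable_pair_case_sum:
  assumes f: "(\<lambda>(x, s). f x s) \<in> K \<Otimes>\<^sub>M M \<rightarrow>\<^sub>M L"
    and g: "(\<lambda>(x, s). g x s) \<in> K \<Otimes>\<^sub>M N \<rightarrow>\<^sub>M L"
  shows "(\<lambda>(x, t). case_sum (f x) (g x) t) \<in> K \<Otimes>\<^sub>M sum_measure M N \<rightarrow>\<^sub>M L"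
proof -
  let ?S = "K \<Otimes>\<^sub>M sum_measure M N"
  have "{p \<in> space ?S. isl (snd p)} = space K \<times> Inl ` space M"
    by (auto simp: space_pair_measure space_sum_measure)
  then have isl: "{p \<in> space ?S. isl (snd p)} \<in> sets ?S"
    by (simp add: in_sets_sum_measure_Inl)
  have left: "(\<lambda>p. (fst p, projl (snd p))) \<in> restrict_space ?S {p. isl (snd p)} \<rightarrow>\<^sub>M K \<Otimes>\<^sub>M M"
  proof (rule measurable_Pair)
    have "snd \<in> restrict_space ?S {p. isl (snd p)} \<rightarrow>\<^sub>M restrict_space (sum_measure M N) {t. isl t}"
      by (rule measurable_restrict_space3) auto
    then show "(\<lambda>p. projl (snd p)) \<in> restrict_space ?S {p. isl (snd p)} \<rightarrow>\<^sub>M M"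
      using measurable_projl_sum_measure by (rule measurable_compose)
  qed (rule measurable_restrict_space1, simp)
  have right: "(\<lambda>p. (fst p, projr (snd p))) \<in> restrict_space ?S {p. \<not> isl (snd p)} \<rightarrow>\<^sub>M K \<Otimes>\<^sub>M N"
  proof (rule measurable_Pair)
    have "snd \<in> restrict_space ?S {p. \<not> isl (snd p)} \<rightarrow>\<^sub>M restrict_space (sum_measure M N) {t. \<not> isl t}"
      by (rule measurable_restrict_space3) auto
    then show "(\<lambda>p. projr (snd p)) \<in> restrict_space ?S {p. \<not> isl (snd p)} \<rightarrow>\<^sub>M N"
      using measurable_projr_sum_measure by (rule measurable_compose)
  qed (rule measurable_restrict_space1, simp)
  have eq: "(\<lambda>(x, t). case_sum (f x) (g x) t) =
      (\<lambda>p. if isl (snd p) then (\<lambda>(x, s). f x s) (fst p, projl (snd p)) else (\<lambda>(x, s). g x s) (fst p, projr (snd p)))"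
    by (auto simp: fun_eq_iff split: sum.split)
  show ?thesis
    unfolding eq measurable_If_restrict_space_iff[OF isl]
    using measurable_compose[OF left f] measurable_compose[OF right g] by simp
qed

lemma bounded_nn_integral_sum_measure:
  assumes "\<exists>C::real. \<forall>l. (\<integral>\<^sup>+ s. F l (Inl s) \<partial>M) \<le> ennreal C"
    and "\<exists>C::real. \<forall>l. (\<integral>\<^sup>+ s. F l (Inr s) \<partial>N) \<le> ennreal C"
  shows "\<exists>C::real. \<forall>l. (\<integral>\<^sup>+ t. F l t \<partial>sum_measure M N) \<le> ennreal C"
proof -
  obtain C D :: real where C: "\<And>l. (\<integral>\<^sup>+ s. F l (Inl s) \<partial>M) \<le> ennreal C"
    and D: "\<And>l. (\<integral>\<^sup>+ s. F l (Inr s) \<partial>N) \<le> ennreal D"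
    using assms by blast
  have "(\<integral>\<^sup>+ t. F l t \<partial>sum_measure M N) \<le> ennreal (max C 0 + max D 0)" for l
  proof -
    have "(\<integral>\<^sup>+ t. F l t \<partial>sum_measure M N) \<le> ennreal (max C 0) + ennreal (max D 0)"
      using nn_integral_sum_measure_le[of M N "F l"] C[of l] D[of l]
      by (meson add_mono order_trans ennreal_leI max.cobounded1)
    then show ?thesis by simp
  qed
  then show ?thesis by blast
qed

lemma norm_mult_le_sum_squares:
  fixes a b :: "'a::real_normed_div_algebra"
  shows "norm (a * b) \<le> (norm a)\<^sup>2 + (norm b)\<^sup>2"
  unfolding norm_mult
  using sum_squares_bound[of "norm a" "norm b"] mult_nonneg_nonneg[OF norm_ge_zero norm_ge_zero, of a b]
  by linarith

lemma admissible_rep_measurable: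
  assumes "admissible_rep \<eta> \<alpha> \<beta> \<phi>"
  shows "(\<lambda>t. \<alpha> l t) \<in> borel_measurable \<eta>" "(\<lambda>t. \<beta> l t) \<in> borel_measurable \<eta>"
  using measurable_Pair2[of "\<lambda>(l, t). \<alpha> l t" borel \<eta> borel l]
    measurable_Pair2[of "\<lambda>(l, t). \<beta> l t" borel \<eta> borel l] assms
  by (auto simp: admissible_rep_def)

lemma admissible_rep_integrable:
  assumes a: "admissible_rep \<eta> \<alpha> \<beta> \<phi>"
  shows "integrable \<eta> (\<lambda>t. \<alpha> l t * \<beta> m t)"
proof -
  obtain C D :: real where C: "(\<integral>\<^sup>+ t. ennreal ((cmod (\<alpha> l t))\<^sup>2) \<partial>\<eta>) \<le> ennreal C"
    and D: "(\<integral>\<^sup>+ t. ennreal ((cmod (\<beta> m t))\<^sup>2) \<partial>\<eta>) \<le> ennreal D"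
    using a unfolding admissible_rep_def by blast
  have "(\<integral>\<^sup>+ t. ennreal (cmod (\<alpha> l t * \<beta> m t)) \<partial>\<eta>)
      \<le> (\<integral>\<^sup>+ t. ennreal ((cmod (\<alpha> l t))\<^sup>2) + ennreal ((cmod (\<beta> m t))\<^sup>2) \<partial>\<eta>)"
    by (intro nn_integral_mono) (simp add: ennreal_plus[symmetric] norm_mult_le_sum_squares del: ennreal_plus)
  also have "\<dots> = (\<integral>\<^sup>+ t. ennreal ((cmod (\<alpha> l t))\<^sup>2) \<partial>\<eta>) + (\<integral>\<^sup>+ t. ennreal ((cmod (\<beta> m t))\<^sup>2) \<partial>\<eta>)"
    using admissible_rep_measurable[OF a] by (intro nn_integral_add) auto
  also have "\<dots> \<le> ennreal C + ennreal D"
    using C D by (rule add_mono)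
  also have "\<dots> < \<infinity>"
    by simp
  finally show ?thesis
    using admissible_rep_measurable[OF a] by (simp add: integrable_iff_bounded)
qed

lemma admissible_rep_sum_measure:
  assumes a1: "admissible_rep \<eta>1 \<alpha>1 \<beta>1 \<phi>" and a2: "admissible_rep \<eta>2 \<alpha>2 \<beta>2 \<psi>"
  shows "admissible_rep (sum_measure \<eta>1 \<eta>2) (\<lambda>l. case_sum (\<alpha>1 l) (\<alpha>2 l)) (\<lambda>m. case_sum (\<beta>1 m) (\<beta>2 m))
           (\<lambda>l m. \<phi> l m + \<psi> l m)"
  unfolding admissible_rep_def
proof (intro conjI allI)
  show \<alpha>: "(\<lambda>(l, t). case_sum (\<alpha>1 l) (\<alpha>2 l) t) \<in> borel_measurable (borel \<Otimes>\<^sub>M sum_measure \<eta>1 \<eta>2)"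
    and \<beta>: "(\<lambda>(m, t). case_sum (\<beta>1 m) (\<beta>2 m) t) \<in> borel_measurable (borel \<Otimes>\<^sub>M sum_measure \<eta>1 \<eta>2)"
    using a1 a2 by (auto simp: admissible_rep_def intro!: measurable_pair_case_sum)
  fix l m
  have "(\<lambda>t. case_sum (\<alpha>1 l) (\<alpha>2 l) t * case_sum (\<beta>1 m) (\<beta>2 m) t) \<in> borel_measurable (sum_measure \<eta>1 \<eta>2)"
    using measurable_Pair2[OF \<alpha>, of l] measurable_Pair2[OF \<beta>, of m] by simp
  then have "integrable (sum_measure \<eta>1 \<eta>2) (\<lambda>t. case_sum (\<alpha>1 l) (\<alpha>2 l) t * case_sum (\<beta>1 m) (\<beta>2 m) t)"
    using admissible_rep_integrable[OF a1] admissible_rep_integrable[OF a2]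
    by (simp add: integrable_sum_measure_iff)
  then show "\<phi> l m + \<psi> l m = (\<integral>t. case_sum (\<alpha>1 l) (\<alpha>2 l) t * case_sum (\<beta>1 m) (\<beta>2 m) t \<partial>sum_measure \<eta>1 \<eta>2)"
    using a1 a2 by (simp add: integral_sum_measure admissible_rep_def)
next
  show "\<exists>C::real. \<forall>l. (\<integral>\<^sup>+ t. ennreal ((cmod (case_sum (\<alpha>1 l) (\<alpha>2 l) t))\<^sup>2) \<partial>sum_measure \<eta>1 \<eta>2) \<le> ennreal C"
    using a1 a2 unfolding admissible_rep_def
    by (intro bounded_nn_integral_sum_measure[where F="\<lambda>l t. ennreal ((cmod (case_sum (\<alpha>1 l) (\<alpha>2 l) t))\<^sup>2)"]) simp_all
  show "\<exists>C::real. \<forall>m. (\<integral>\<^sup>+ t. ennreal ((cmod (case_sum (\<beta>1 m) (\<beta>2 m) t))\<^sup>2) \<partial>sum_measure \<eta>1 \<eta>2) \<le> ennreal C"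
    using a1 a2 unfolding admissible_rep_def
    by (intro bounded_nn_integral_sum_measure[where F="\<lambda>m t. ennreal ((cmod (case_sum (\<beta>1 m) (\<beta>2 m) t))\<^sup>2)"]) simp_all
qed

lemma strong_approx_sum_measure:
  assumes "strong_approx \<eta>1 \<gamma>1 E En" and "strong_approx \<eta>2 \<gamma>2 E En"
  shows "strong_approx (sum_measure \<eta>1 \<eta>2) (\<lambda>l. case_sum (\<gamma>1 l) (\<gamma>2 l)) E En"
  unfolding strong_approx_def
proof
  fix v
  define d where "d n f = ennreal ((cnorm (spint (En n) f v - spint E f v))\<^sup>2)" for n f
  have "(\<lambda>n. (\<integral>\<^sup>+ s. d n (\<lambda>l. \<gamma>1 l s) \<partial>\<eta>1) + (\<integral>\<^sup>+ s. d n (\<lambda>l. \<gamma>2 l s) \<partial>\<eta>2)) \<longlonglongrightarrow> 0 + 0"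
    using assms unfolding strong_approx_def d_def by (intro tendsto_add) auto
  then have lim: "(\<lambda>n. (\<integral>\<^sup>+ s. d n (\<lambda>l. \<gamma>1 l s) \<partial>\<eta>1) + (\<integral>\<^sup>+ s. d n (\<lambda>l. \<gamma>2 l s) \<partial>\<eta>2)) \<longlonglongrightarrow> 0"
    by simp
  have le: "(\<integral>\<^sup>+ t. d n (\<lambda>l. case_sum (\<gamma>1 l) (\<gamma>2 l) t) \<partial>sum_measure \<eta>1 \<eta>2)
      \<le> (\<integral>\<^sup>+ s. d n (\<lambda>l. \<gamma>1 l s) \<partial>\<eta>1) + (\<integral>\<^sup>+ s. d n (\<lambda>l. \<gamma>2 l s) \<partial>\<eta>2)" for n
    using nn_integral_sum_measure_le[of \<eta>1 \<eta>2 "\<lambda>t. d n (\<lambda>l. case_sum (\<gamma>1 l) (\<gamma>2 l) t)"] by simp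
  show "(\<lambda>n. \<integral>\<^sup>+ t. d n (\<lambda>l. case_sum (\<gamma>1 l) (\<gamma>2 l) t) \<partial>sum_measure \<eta>1 \<eta>2) \<longlonglongrightarrow> 0"
    by (rule tendsto_sandwich[OF always_eventually always_eventually tendsto_const lim])
      (simp_all add: le)
qed

lemma in_Ars_add:
  assumes "in_Ars TYPE('a) E En \<phi>" and "in_Ars TYPE('b) E En \<psi>"
  shows "in_Ars TYPE('a + 'b) E En (\<lambda>l m. \<phi> l m + \<psi> l m)"
proof -
  obtain \<eta>1 :: "'a measure" and \<alpha>1 \<beta>1
    where 1: "admissible_rep \<eta>1 \<alpha>1 \<beta>1 \<phi>" "strong_approx \<eta>1 \<alpha>1 E En"
    using assms(1) unfolding in_Ars_def by blast
  obtain \<eta>2 :: "'b measure" and \<alpha>2 \<beta>2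
    where 2: "admissible_rep \<eta>2 \<alpha>2 \<beta>2 \<psi>" "strong_approx \<eta>2 \<alpha>2 E En"
    using assms(2) unfolding in_Ars_def by blast
  show ?thesis
    unfolding in_Ars_def
    using admissible_rep_sum_measure[OF 1(1) 2(1)] strong_approx_sum_measure[OF 1(2) 2(2)] by blast
qed

lemma in_Als_add:
  assumes "in_Als TYPE('a) E En \<phi>" and "in_Als TYPE('b) E En \<psi>"
  shows "in_Als TYPE('a + 'b) E En (\<lambda>l m. \<phi> l m + \<psi> l m)"
proof -
  obtain \<eta>1 :: "'a measure" and \<alpha>1 \<beta>1
    where 1: "admissible_rep \<eta>1 \<alpha>1 \<beta>1 \<phi>" "strong_approx \<eta>1 \<beta>1 E En"
    using assms(1) unfolding in_Als_def by blast
  obtain \<eta>2 :: "'b measure" and \<alpha>2 \<beta>2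
    where 2: "admissible_rep \<eta>2 \<alpha>2 \<beta>2 \<psi>" "strong_approx \<eta>2 \<beta>2 E En"
    using assms(2) unfolding in_Als_def by blast
  show ?thesis
    unfolding in_Als_def
    using admissible_rep_sum_measure[OF 1(1) 2(1)] strong_approx_sum_measure[OF 1(2) 2(2)] by blast
qed

theorem proposition3p1:
  fixes A B :: "'h::chs_chilbert op"
    and An Bn :: "nat \<Rightarrow> 'h op"
    and \<phi> \<psi> :: "real \<Rightarrow> real \<Rightarrow> complex"
  assumes "separable_ch (UNIV :: 'h set)"
    and "self_adjoint A" and "self_adjoint B"
    and "\<forall>n. self_adjoint (An n)" and "\<forall>n. self_adjoint (Bn n)"
  shows "(in_Ars TYPE('a) (spectral_measure A) (\<lambda>n. spectral_measure (An n)) \<phi> \<and>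
          in_Ars TYPE('b) (spectral_measure A) (\<lambda>n. spectral_measure (An n)) \<psi> \<longrightarrow>
          in_Ars TYPE('a + 'b) (spectral_measure A) (\<lambda>n. spectral_measure (An n)) (\<lambda>l m. \<phi> l m + \<psi> l m))
       \<and> (in_Als TYPE('c) (spectral_measure B) (\<lambda>n. spectral_measure (Bn n)) \<phi> \<and>
          in_Als TYPE('d) (spectral_measure B) (\<lambda>n. spectral_measure (Bn n)) \<psi> \<longrightarrow>
          in_Als TYPE('c + 'd) (spectral_measure B) (\<lambda>n. spectral_measure (Bn n)) (\<lambda>l m. \<phi> l m + \<psi> l m))"
  using in_Ars_add in_Als_add by blast

end
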